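(* In the setting described in the context, let $\emptyset\subsetneq\mathcal A\subsetneq\mathcal C^*$ and $\mathcal S=\bigcup_{v\in\mathcal A}\mathcal U_v$. Suppose $y'_{\mathcal S}\ge\lfloor y_{\mathcal S}\rfloor$ and $x_{\mathcal S,\mathcal J}\le f(|\mathcal J|,y_{\mathcal S})$ for every $\mathcal J\subseteq\mathcal C$. Then $$\big(y'_{\mathcal S}-\lfloor y'_{\mathcal S}\rfloor\big)\big(\lceil y_{\mathcal S}\rceil-y_{\mathcal S}\big)\,d(\mathcal A,\mathcal C^*\setminus\mathcal A)\ \le\ \frac4u D_{\mathcal S}+\frac{4\ell+2}{u}D'_{\mathcal S}.$$
   Context: Setting: finite sets $\mathcal F$ (facility locations) and $\mathcal C$ (clients), a metric $d$ on $\mathcal F\cup\mathcal C$, positive integers $k,u,\ell$, and reals $x_{i,j}\ge0$, $y_i\ge0$ with $\sum_{i\in\mathcal F}x_{i,j}=1$ for all $j$, $\sum_iy_i\le k$, $x_{i,j}\le y_i$, $\sum_jx_{i,j}\le uy_i$. Notation: $y_{\mathcal B}=\sum_{i\in\mathcal B}y_i$, $x_{\mathcal B,j}=\sum_{i\in\mathcal B}x_{i,j}$, $x_{\mathcal B,\mathcal J}=\sum_{i\in\mathcal B,j\in\mathcal J}x_{i,j}$, $y'_{\mathcal B}=\frac1u\sum_{j\in\mathcal C}x_{\mathcal B,j}$; $d(\mathcal X,\mathcal Y)=\min_{a\in\mathcal X,b\in\mathcal Y}d(a,b)$; $d_{av}(j)=\sum_ix_{i,j}d(i,j)$; $D_i=\sum_jx_{i,j}d(i,j)$,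 $D'_i=\sum_jx_{i,j}d_{av}(j)$, $D_{\mathcal B}=\sum_{i\in\mathcal B}D_i$, $D'_{\mathcal B}=\sum_{i\in\mathcal B}D'_i$. The function $f:\mathbb Z_{\ge0}\times\mathbb R_{\ge0}\to\mathbb R$ is $f(p,q)=qu$ if $q\le\lfloor p/u\rfloor$; $u\lfloor p/u\rfloor+u(p/u-\lfloor p/u\rfloor)(q-\lfloor p/u\rfloor)$ if $\lfloor p/u\rfloor<q<\lceil p/u\rceil$; $p$ if $q\ge\lceil p/u\rceil$. Construction of $\mathcal C^*\subseteq\mathcal C$: start with $\mathcal C^*=\emptyset$, $R=\mathcal C$; while $R\ne\emptyset$, choose $v\in R$ with smallest $d_{av}(v)$, add it to $\mathcal C^*$, and remove from $R$ all $j\in R$ with $d(j,v)\le2\ell d_{av}(j)$. Each $i\in\mathcal F$ is put into $\mathcal U_v$ for one $v\in\mathcal C^*$ closest to $i$ (ties arbitrary). *)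

theory Defs
  imports Complex_Main
begin

definition d_av :: "'a set \<Rightarrow> ('a \<Rightarrow> 'a \<Rightarrow> real) \<Rightarrow> ('a \<Rightarrow> 'a \<Rightarrow> real) \<Rightarrow> 'a \<Rightarrow> real" where
  "d_av F x d j = (\<Sum>i\<in>F. x i j * d i j)"

text \<open>One run of the greedy construction of C*: states (chosen set, remaining set R).
  A step picks v in R with smallest d_av, adds it, and removes all j in R with
  d(j,v) \<le> 2 l d_av(j).\<close>
inductive greedy_run :: "('a \<Rightarrow> real) \<Rightarrow> ('a \<Rightarrow> 'a \<Rightarrow> real) \<Rightarrow> nat \<Rightarrow> 'a set \<Rightarrow> 'a set \<Rightarrow> 'a set \<Rightarrow> 'a set \<Rightarrow> bool"
  for dav d l where
  stop: "greedy_run dav d l S R S R"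
| step: "v \<in> R \<Longrightarrow> (\<forall>j\<in>R. dav v \<le> dav j) \<Longrightarrow>
         greedy_run dav d l (insert v S) {j \<in> R. \<not> d j v \<le> 2 * real l * dav j} S' R' \<Longrightarrow>
         greedy_run dav d l S R S' R'"

definition is_Cstar :: "'a set \<Rightarrow> ('a \<Rightarrow> real) \<Rightarrow> ('a \<Rightarrow> 'a \<Rightarrow> real) \<Rightarrow> nat \<Rightarrow> 'a set \<Rightarrow> bool" where
  "is_Cstar C dav d l Cs = greedy_run dav d l {} C Cs {}"

text \<open>U_v for an assignment sigma of facilities to a closest point of C*.\<close>
definition U_set :: "'a set \<Rightarrow> ('a \<Rightarrow> 'a) \<Rightarrow> 'a \<Rightarrow> 'a set" where
  "U_set F sigma v = {i \<in> F. sigma i = v}"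

definition set_dist :: "('a \<Rightarrow> 'a \<Rightarrow> real) \<Rightarrow> 'a set \<Rightarrow> 'a set \<Rightarrow> real" where
  "set_dist d X Y = Min {d a b | a b. a \<in> X \<and> b \<in> Y}"

definition f_fun :: "nat \<Rightarrow> nat \<Rightarrow> real \<Rightarrow> real" where
  "f_fun u p q =
     (if q \<le> real (p div u) then q * real u
      else if q < of_int \<lceil>real p / real u\<rceil>
        then real u * real (p div u) + real u * (real p / real u - real (p div u)) * (q - real (p div u))
      else real p)"

end

theory Submission imports Defs begin

text \<open>Write \<open>a j = x(S, j)\<close> and \<open>\<Delta> = d(A, C* - A)\<close>. Facilities \<open>i \<in> S\<close> and
  \<open>i' \<notin> S\<close> are closest to centres on different sides of the cut, and the centre of \<open>C*\<close>
  covering client \<open>j\<close> is within \<open>2 l d_av(j)\<close> of \<open>j\<close>, so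
  \<open>\<Delta> \<le> 2 d(i,j) + 2 d(i',j) + 4 l d_av(j)\<close>. Weighting by \<open>x(i,j) x(i',j)\<close> and summing over
  the split pairs gives \<open>\<Delta> \<Sum>\<^sub>j a j (1 - a j) \<le> 2 D(S) + (4 l + 2) D'(S)\<close>.
  Conversely, the bound \<open>x(S, J) \<le> f(|J|, y(S))\<close>, applied to the clients whose \<open>a j\<close> exceeds
  the fractional part of \<open>y(S)\<close>, keeps the \<open>a j\<close> away from 0 and 1:
  \<open>\<Sum>\<^sub>j a j (1 - a j) \<ge> u (y'(S) - \<lfloor>y(S)\<rfloor>)(\<lceil>y(S)\<rceil> - y(S))\<close>, and \<open>\<lfloor>y(S)\<rfloor> \<le> \<lfloor>y'(S)\<rfloor>\<close>.\<close>

lemma greedy_run_covers: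
  assumes "greedy_run dav d l S R S' R'"
  shows "S \<subseteq> S'" "S' \<subseteq> S \<union> R" "\<forall>j\<in>R. j \<in> R' \<or> (\<exists>c\<in>S'. d j c \<le> 2 * real l * dav j)"
  using assms by (induction rule: greedy_run.induct) auto

lemma is_Cstar_covers:
  assumes "is_Cstar C dav d l Cs"
  shows "Cs \<subseteq> C" "\<forall>j\<in>C. \<exists>c\<in>Cs. d j c \<le> 2 * real l * dav j"
  using greedy_run_covers[OF assms[unfolded is_Cstar_def]] by auto

lemma set_dist_le:
  assumes "finite X" "finite Y" "a \<in> X" "b \<in> Y"
  shows "set_dist d X Y \<le> d a b"
proof -
  have "{d a b | a b. a \<in> X \<and> b \<in> Y} = (\<lambda>(a, b). d a b) ` (X \<times> Y)" by auto
  then show ?thesis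
    unfolding set_dist_def using assms by (auto intro: Min_le)
qed

lemma set_dist_nonneg:
  assumes "finite X" "finite Y" "X \<noteq> {}" "Y \<noteq> {}" "\<forall>a\<in>X. \<forall>b\<in>Y. d a b \<ge> 0"
  shows "set_dist d X Y \<ge> 0"
proof -
  have "{d a b | a b. a \<in> X \<and> b \<in> Y} = (\<lambda>(a, b). d a b) ` (X \<times> Y)" by auto
  then show ?thesis
    unfolding set_dist_def using assms by (auto intro!: Min.boundedI)
qed

lemma dist_le_via_common_centre:
  fixes d :: "'a \<Rightarrow> 'a \<Rightarrow> real"
  assumes tri: "\<forall>a\<in>X. \<forall>b\<in>X. \<forall>c\<in>X. d a c \<le> d a b + d b c"
    and sym: "\<forall>a\<in>X. \<forall>b\<in>X. d a b = d b a"
    and pts: "i \<in> X" "i' \<in> X" "j \<in> X" "s \<in> X" "s' \<in> X" "c \<in> X"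
    and "d i s \<le> d i c" "d i' s' \<le> d i' c"
  shows "d s s' \<le> 2 * d i j + 2 * d i' j + 2 * d j c"
proof -
  have "d s s' \<le> d s i + d i s'" and "d i s' \<le> d i j + d j s'" and "d j s' \<le> d j i' + d i' s'"
    using tri pts by blast+
  then have "d s s' \<le> d s i + d i j + d j i' + d i' s'" by linarith
  also have "\<dots> \<le> (d i j + d j c) + d i j + d i' j + (d i' j + d j c)"
    using assms by (smt (verit))
  finally show ?thesis by simp
qed

lemma set_dist_cut_le:
  fixes d :: "'a \<Rightarrow> 'a \<Rightarrow> real"
  assumes finC: "finite C"
    and d_tri: "\<forall>a\<in>F \<union> C. \<forall>b\<in>F \<union> C. \<forall>c\<in>F \<union> C. d a c \<le> d a b + d b c"
    and d_sym: "\<forall>a\<in>F \<union> C. \<forall>b\<in>F \<union> C. d a b = d b a"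
    and Cstar: "is_Cstar C dav d l Cs"
    and sigma: "\<forall>i\<in>F. sigma i \<in> Cs \<and> (\<forall>v\<in>Cs. d i (sigma i) \<le> d i v)"
    and A_sub: "A \<subseteq> Cs"
    and i: "i \<in> F" "sigma i \<in> A" and i': "i' \<in> F" "sigma i' \<notin> A" and j: "j \<in> C"
  shows "set_dist d A (Cs - A) \<le> 2 * d i j + 2 * d i' j + 4 * real l * dav j"
proof -
  have CsC: "Cs \<subseteq> C" using is_Cstar_covers(1)[OF Cstar] .
  obtain c where c: "c \<in> Cs" "d j c \<le> 2 * real l * dav j"
    using is_Cstar_covers(2)[OF Cstar] j by blast
  have "set_dist d A (Cs - A) \<le> d (sigma i) (sigma i')"
    using finC CsC A_sub i i' sigma by (intro set_dist_le) (auto intro: finite_subset)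
  also have "\<dots> \<le> 2 * d i j + 2 * d i' j + 2 * d j c"
    using d_tri d_sym sigma c(1) CsC i i' j
    by (intro dist_le_via_common_centre[where X = "F \<union> C"]) auto
  finally show ?thesis using c(2) by linarith
qed

text \<open>With \<open>a = \<Sum>\<^sub>S w\<close> and \<open>b = \<Sum>\<^sub>F\<^sub>-\<^sub>S w = 1 - a\<close>, the product \<open>a b\<close> is the total weight
  \<open>w i * w i'\<close> of the pairs split by \<open>S\<close>; after expanding, the factors \<open>b \<le> 1\<close> are dropped.\<close>

lemma split_mass_product_le:
  fixes w e :: "'a \<Rightarrow> real"
  assumes fin: "finite F" and SF: "S \<subseteq> F"
    and w_nonneg: "\<forall>i\<in>F. w i \<ge> 0" and w_sum: "sum w F = 1"
    and e_nonneg: "\<forall>i\<in>F. e i \<ge> 0" and R_nonneg: "R \<ge> 0"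
    and pair: "\<forall>i\<in>S. \<forall>i'\<in>F - S. \<Delta> \<le> 2 * e i + 2 * e i' + R"
  shows "\<Delta> * (sum w S * (1 - sum w S))
         \<le> 2 * (\<Sum>i\<in>S. w i * e i) + 2 * sum w S * (\<Sum>i\<in>F. w i * e i) + R * sum w S"
proof -
  define a where "a = sum w S"
  define b where "b = sum w (F - S)"
  have b_eq: "b = 1 - a"
    using w_sum sum.subset_diff[OF SF fin, of w] unfolding a_def b_def by simp
  have a_nonneg: "a \<ge> 0" and b_nonneg: "b \<ge> 0"
    unfolding a_def b_def using w_nonneg SF by (auto intro!: sum_nonneg)
  have we_nonneg: "\<forall>i\<in>F. w i * e i \<ge> 0" using w_nonneg e_nonneg by simp
  have pairs: "(\<Sum>i\<in>S. \<Sum>i'\<in>F - S. w i * w i') = a * b"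
    unfolding a_def b_def sum_product ..
  have near: "(\<Sum>i\<in>S. \<Sum>i'\<in>F - S. e i * (w i * w i')) = (\<Sum>i\<in>S. w i * e i) * b"
    unfolding b_def sum_product by (simp add: mult_ac)
  have far: "(\<Sum>i\<in>S. \<Sum>i'\<in>F - S. e i' * (w i * w i')) = a * (\<Sum>i\<in>F - S. w i * e i)"
    unfolding a_def sum_product by (simp add: mult_ac)
  have "\<Delta> * (a * b) = (\<Sum>i\<in>S. \<Sum>i'\<in>F - S. \<Delta> * (w i * w i'))"
    unfolding pairs[symmetric] by (simp add: sum_distrib_left)
  also have "\<dots> \<le> (\<Sum>i\<in>S. \<Sum>i'\<in>F - S. (2 * e i + 2 * e i' + R) * (w i * w i'))"
    using pair w_nonneg SF by (intro sum_mono mult_right_mono) auto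
  also have "\<dots> = 2 * (\<Sum>i\<in>S. \<Sum>i'\<in>F - S. e i * (w i * w i'))
                  + 2 * (\<Sum>i\<in>S. \<Sum>i'\<in>F - S. e i' * (w i * w i'))
                  + R * (\<Sum>i\<in>S. \<Sum>i'\<in>F - S. w i * w i')"
    by (simp add: sum.distrib sum_distrib_left distrib_right mult.assoc)
  also have "\<dots> = 2 * (\<Sum>i\<in>S. w i * e i) * b + 2 * a * (\<Sum>i\<in>F - S. w i * e i) + R * (a * b)"
    unfolding near far pairs by simp
  also have "\<dots> \<le> 2 * (\<Sum>i\<in>S. w i * e i) + 2 * a * (\<Sum>i\<in>F. w i * e i) + R * a"
  proof -
    have "(\<Sum>i\<in>S. w i * e i) * b \<le> (\<Sum>i\<in>S. w i * e i)"
      using we_nonneg SF a_nonneg b_eq by (intro mult_left_le) (auto intro!: sum_nonneg)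
    moreover have "a * (\<Sum>i\<in>F - S. w i * e i) \<le> a * (\<Sum>i\<in>F. w i * e i)"
      using fin we_nonneg a_nonneg by (intro mult_left_mono sum_mono2) auto
    moreover have "R * (a * b) \<le> R * a"
      using R_nonneg a_nonneg b_nonneg b_eq by (intro mult_left_mono mult_left_le) auto
    ultimately show ?thesis by linarith
  qed
  finally show ?thesis unfolding b_eq a_def .
qed

text \<open>For fractional \<open>q\<close>, \<open>f(p, \<cdot>)\<close> is dominated on \<open>[\<lfloor>q\<rfloor>, \<lceil>q\<rceil>]\<close> by the chord between
  \<open>f(p, \<lfloor>q\<rfloor>) \<le> u\<lfloor>q\<rfloor>\<close> and \<open>f(p, \<lceil>q\<rceil>) \<le> p\<close>.\<close>

lemma f_fun_le_chord:
  assumes u: "u > 0" and frac: "of_int \<lfloor>q\<rfloor> < q"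
  shows "f_fun u p q \<le> (q - of_int \<lfloor>q\<rfloor>) * real p + (of_int \<lfloor>q\<rfloor> + 1 - q) * real u * of_int \<lfloor>q\<rfloor>"
proof -
  define m where "m = \<lfloor>q\<rfloor>"
  define n where "n = p div u"
  have q_less: "q < of_int m + 1" unfolding m_def by linarith
  have up: "real u > 0" using u by simp
  have n_le: "real n * real u \<le> real p"
    unfolding n_def by (metis times_div_less_eq_dividend mult.commute of_nat_le_iff of_nat_mult)
  have p_less: "real p / real u < real n + 1"
  proof -
    have "real p = real n * real u + real (p mod u)"
      unfolding n_def by (metis div_mult_mod_eq of_nat_add of_nat_mult)
    moreover have "real (p mod u) < real u" using u by simp
    ultimately have "real p < (real n + 1) * real u" by (simp add: distrib_right)
    then show ?thesis using up by (simp add: divide_less_eq)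
  qed
  consider (low) "q \<le> real n"
    | (mid) "\<not> q \<le> real n" "q < of_int \<lceil>real p / real u\<rceil>"
    | (high) "\<not> q \<le> real n" "\<not> q < of_int \<lceil>real p / real u\<rceil>" by blast
  then show ?thesis
  proof cases
    case low
    have "m \<le> int n" using low unfolding m_def by (metis floor_mono floor_of_nat)
    moreover have "m \<noteq> int n" using low frac unfolding m_def by auto
    ultimately have "m + 1 \<le> int n" by linarith
    then have "of_int m + 1 \<le> real n" by (metis of_int_1 of_int_add of_int_le_iff of_int_of_nat_eq)
    then have "(of_int m + 1) * real u \<le> real p"
      using n_le up by (smt (verit) mult_right_mono)
    then have "0 \<le> (q - of_int m) * (real p - (of_int m + 1) * real u)"
      using frac unfolding m_def by simp
    then show ?thesis using low unfolding f_fun_def m_def[symmetric] n_def[symmetric]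
      by (simp add: algebra_simps)
  next
    case mid
    have "\<lceil>real p / real u\<rceil> \<le> int n + 1" using p_less by (simp add: ceiling_le_iff)
    then have "real_of_int \<lceil>real p / real u\<rceil> \<le> real_of_int (int n + 1)" by (simp only: of_int_le_iff)
    then have "q < real n + 1" using mid(2) by simp
    then have "m = int n" using mid(1) unfolding m_def by (simp add: floor_eq_iff)
    then show ?thesis using mid up unfolding f_fun_def m_def[symmetric] n_def[symmetric]
      by (simp add: algebra_simps)
  next
    case high
    then have "real p / real u \<le> of_int m" unfolding m_def
      by (meson ceiling_le_iff le_floor_iff not_less)
    then have "real p \<le> of_int m * real u" using up by (simp add: divide_le_eq)
    then have "(of_int m + 1 - q) * real p \<le> (of_int m + 1 - q) * (of_int m * real u)"
      using q_less by (intro mult_left_mono) auto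
    then show ?thesis using high unfolding f_fun_def m_def[symmetric] n_def[symmetric]
      by (simp add: algebra_simps)
  qed
qed

text \<open>Split \<open>C\<close> at the threshold \<open>t\<close>: above it \<open>a(1 - a) \<ge> t(1 - a)\<close>, below it
  \<open>a(1 - a) \<ge> (1 - t)a\<close>; the upper part is controlled by the hypothesis on subsets.\<close>

lemma spread_lower_bound:
  fixes a :: "'a \<Rightarrow> real"
  assumes fin: "finite C" and a01: "\<forall>j\<in>C. 0 \<le> a j \<and> a j \<le> 1"
    and t0: "0 \<le> t" and t1: "t \<le> 1"
    and subsets: "\<forall>J\<subseteq>C. sum a J \<le> t * real (card J) + c"
  shows "(1 - t) * sum a C - c \<le> (\<Sum>j\<in>C. a j * (1 - a j))"
proof -
  define J where "J = {j\<in>C. t < a j}"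
  have JC: "J \<subseteq> C" unfolding J_def by auto
  have upper: "(\<Sum>j\<in>J. t * (1 - a j)) \<le> (\<Sum>j\<in>J. a j * (1 - a j))"
    using a01 unfolding J_def by (intro sum_mono mult_right_mono) auto
  have lower: "(\<Sum>j\<in>C - J. (1 - t) * a j) \<le> (\<Sum>j\<in>C - J. a j * (1 - a j))"
    using a01 unfolding J_def by (intro sum_mono) (auto simp: mult.commute mult_left_mono)
  have "(\<Sum>j\<in>J. t * (1 - a j)) = t * real (card J) - t * sum a J"
    by (simp add: sum_distrib_left[symmetric] sum_subtractf right_diff_distrib)
  moreover have "(\<Sum>j\<in>C - J. (1 - t) * a j) = (1 - t) * (sum a C - sum a J)"
    by (simp add: sum_distrib_left[symmetric] sum_diff fin JC)
  moreover have "(\<Sum>j\<in>C. a j * (1 - a j)) = (\<Sum>j\<in>J. a j * (1 - a j)) + (\<Sum>j\<in>C - J. a j * (1 - a j))"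
    by (metis JC fin sum.subset_diff add.commute)
  moreover have "sum a J \<le> t * real (card J) + c" using subsets JC by blast
  ultimately show ?thesis using upper lower by (simp add: algebra_simps)
qed

lemma fractional_gap_le_spread:
  fixes a :: "'a \<Rightarrow> real"
  assumes u: "u > 0" and fin: "finite C" and a01: "\<forall>j\<in>C. 0 \<le> a j \<and> a j \<le> 1"
    and floor_le: "of_int \<lfloor>q\<rfloor> \<le> sum a C / real u"
    and subsets: "\<forall>J\<subseteq>C. sum a J \<le> f_fun u (card J) q"
  shows "real u * ((sum a C / real u - of_int \<lfloor>sum a C / real u\<rfloor>) * (of_int \<lceil>q\<rceil> - q))
         \<le> (\<Sum>j\<in>C. a j * (1 - a j))"
proof (cases "of_int \<lfloor>q\<rfloor> < q")
  case False
  then have "q = of_int \<lfloor>q\<rfloor>" using of_int_floor_le[of q] by linarith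
  then have gap: "of_int \<lceil>q\<rceil> - q = 0" by (metis ceiling_of_int diff_self)
  show ?thesis unfolding gap using a01 by (simp add: sum_nonneg)
next
  case True
  define m where "m = \<lfloor>q\<rfloor>"
  define y' where "y' = sum a C / real u"
  have up: "real u > 0" using u by simp
  have chord: "\<forall>J\<subseteq>C. sum a J \<le> (q - of_int m) * real (card J) + (of_int m + 1 - q) * real u * of_int m"
    using subsets f_fun_le_chord[OF u True] unfolding m_def by (meson order_trans)
  have "0 \<le> q - of_int m" "q - of_int m \<le> 1" unfolding m_def by linarith+
  from spread_lower_bound[OF fin a01 this chord]
  have "(1 - (q - of_int m)) * sum a C - (of_int m + 1 - q) * real u * of_int m
        \<le> (\<Sum>j\<in>C. a j * (1 - a j))" .
  moreover have "sum a C = real u * y'" unfolding y'_def using up by simp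
  ultimately have spread: "real u * ((y' - of_int m) * (of_int m + 1 - q)) \<le> (\<Sum>j\<in>C. a j * (1 - a j))"
    by (simp add: algebra_simps)
  have "real_of_int m \<le> of_int \<lfloor>y'\<rfloor>"
    using floor_le unfolding m_def y'_def by (simp add: le_floor_iff)
  moreover have gap: "of_int \<lceil>q\<rceil> - q = of_int m + 1 - q"
    using True unfolding m_def by (simp add: ceiling_altdef)
  moreover have "of_int m + 1 - q \<ge> 0" unfolding m_def by linarith
  ultimately have "(y' - of_int \<lfloor>y'\<rfloor>) * (of_int \<lceil>q\<rceil> - q) \<le> (y' - of_int m) * (of_int m + 1 - q)"
    unfolding gap by (intro mult_right_mono) auto
  then have "real u * ((y' - of_int \<lfloor>y'\<rfloor>) * (of_int \<lceil>q\<rceil> - q))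
             \<le> real u * ((y' - of_int m) * (of_int m + 1 - q))"
    using up by (intro mult_left_mono) auto
  with spread show ?thesis unfolding y'_def by linarith
qed

theorem lemma2:
  fixes F C :: "'a set" and d :: "'a \<Rightarrow> 'a \<Rightarrow> real"
    and k u l :: nat and x :: "'a \<Rightarrow> 'a \<Rightarrow> real" and y :: "'a \<Rightarrow> real"
    and Cs A :: "'a set" and sigma :: "'a \<Rightarrow> 'a"
  assumes finF: "finite F" and finC: "finite C"
    and d_nonneg: "\<forall>a\<in>F \<union> C. \<forall>b\<in>F \<union> C. d a b \<ge> 0"
    and d_zero: "\<forall>a\<in>F \<union> C. \<forall>b\<in>F \<union> C. d a b = 0 \<longleftrightarrow> a = b"
    and d_sym: "\<forall>a\<in>F \<union> C. \<forall>b\<in>F \<union> C. d a b = d b a"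
    and d_tri: "\<forall>a\<in>F \<union> C. \<forall>b\<in>F \<union> C. \<forall>c\<in>F \<union> C. d a c \<le> d a b + d b c"
    and kpos: "k > 0" and upos: "u > 0" and lpos: "l > 0"
    and x_nonneg: "\<forall>i\<in>F. \<forall>j\<in>C. x i j \<ge> 0"
    and y_nonneg: "\<forall>i\<in>F. y i \<ge> 0"
    and x_sum: "\<forall>j\<in>C. (\<Sum>i\<in>F. x i j) = 1"
    and y_sum: "(\<Sum>i\<in>F. y i) \<le> real k"
    and x_le_y: "\<forall>i\<in>F. \<forall>j\<in>C. x i j \<le> y i"
    and cap: "\<forall>i\<in>F. (\<Sum>j\<in>C. x i j) \<le> real u * y i"
    and Cstar: "is_Cstar C (d_av F x d) d l Cs"
    and sigma: "\<forall>i\<in>F. sigma i \<in> Cs \<and> (\<forall>v\<in>Cs. d i (sigma i) \<le> d i v)"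
    and A_ne: "A \<noteq> {}" and A_sub: "A \<subset> Cs"
    and hyp1: "(1 / real u) * (\<Sum>j\<in>C. \<Sum>i\<in>(\<Union>v\<in>A. U_set F sigma v). x i j)
               \<ge> of_int \<lfloor>\<Sum>i\<in>(\<Union>v\<in>A. U_set F sigma v). y i\<rfloor>"
    and hyp2: "\<forall>J. J \<subseteq> C \<longrightarrow>
               (\<Sum>i\<in>(\<Union>v\<in>A. U_set F sigma v). \<Sum>j\<in>J. x i j)
               \<le> f_fun u (card J) (\<Sum>i\<in>(\<Union>v\<in>A. U_set F sigma v). y i)"
  shows "let S = (\<Union>v\<in>A. U_set F sigma v);
             yS = (\<Sum>i\<in>S. y i);
             y'S = (1 / real u) * (\<Sum>j\<in>C. \<Sum>i\<in>S. x i j);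
             DS = (\<Sum>i\<in>S. \<Sum>j\<in>C. x i j * d i j);
             D'S = (\<Sum>i\<in>S. \<Sum>j\<in>C. x i j * d_av F x d j)
         in (y'S - of_int \<lfloor>y'S\<rfloor>) * (of_int \<lceil>yS\<rceil> - yS) * set_dist d A (Cs - A)
            \<le> 4 / real u * DS + (4 * real l + 2) / real u * D'S"
proof -
  define S where "S = (\<Union>v\<in>A. U_set F sigma v)"
  define a where "a j = (\<Sum>i\<in>S. x i j)" for j
  define T where "T = (\<Sum>j\<in>C. a j * (1 - a j))"
  define \<Delta> where "\<Delta> = set_dist d A (Cs - A)"
  define DS where "DS = (\<Sum>i\<in>S. \<Sum>j\<in>C. x i j * d i j)"
  define D'S where "D'S = (\<Sum>i\<in>S. \<Sum>j\<in>C. x i j * d_av F x d j)"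
  have S_iff: "i \<in> S \<longleftrightarrow> i \<in> F \<and> sigma i \<in> A" for i unfolding S_def U_set_def by auto
  then have SF: "S \<subseteq> F" by auto
  have CsC: "Cs \<subseteq> C" using is_Cstar_covers(1)[OF Cstar] .
  then have "finite Cs" using finC finite_subset by blast
  then have \<Delta>_nonneg: "\<Delta> \<ge> 0"
    unfolding \<Delta>_def using CsC A_ne A_sub d_nonneg
    by (intro set_dist_nonneg) (auto intro: finite_subset)
  have DS_nonneg: "DS \<ge> 0" unfolding DS_def using SF x_nonneg d_nonneg by (auto intro!: sum_nonneg)
  have client: "\<Delta> * (a j * (1 - a j))
      \<le> 2 * (\<Sum>i\<in>S. x i j * d i j) + (4 * real l + 2) * (\<Sum>i\<in>S. x i j * d_av F x d j)"
    if j: "j \<in> C" for j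
  proof -
    have "\<forall>i\<in>S. \<forall>i'\<in>F - S. \<Delta> \<le> 2 * d i j + 2 * d i' j + 4 * real l * d_av F x d j"
      unfolding \<Delta>_def using S_iff A_sub j
      by (auto intro!: set_dist_cut_le[OF finC d_tri d_sym Cstar sigma])
    moreover have "d_av F x d j \<ge> 0"
      unfolding d_av_def using j x_nonneg d_nonneg by (auto intro!: sum_nonneg)
    ultimately have "\<Delta> * (a j * (1 - a j))
        \<le> 2 * (\<Sum>i\<in>S. x i j * d i j) + 2 * a j * d_av F x d j + 4 * real l * d_av F x d j * a j"
      unfolding a_def d_av_def using j x_nonneg x_sum d_nonneg
      by (intro split_mass_product_le[OF finF SF]) auto
    moreover have "(\<Sum>i\<in>S. x i j * d_av F x d j) = a j * d_av F x d j"
      unfolding a_def by (simp add: sum_distrib_right)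
    ultimately show ?thesis by (simp add: algebra_simps)
  qed
  have spread_upper: "\<Delta> * T \<le> 2 * DS + (4 * real l + 2) * D'S"
    using sum_mono[of C, OF client] unfolding T_def DS_def D'S_def
    by (simp add: sum_distrib_left sum.distrib sum.swap[of _ S C])
  have a01: "\<forall>j\<in>C. 0 \<le> a j \<and> a j \<le> 1"
  proof
    fix j assume j: "j \<in> C"
    have "a j \<le> (\<Sum>i\<in>F. x i j)"
      unfolding a_def using finF SF x_nonneg j by (intro sum_mono2) auto
    then show "0 \<le> a j \<and> a j \<le> 1"
      unfolding a_def using x_sum x_nonneg SF j by (auto intro!: sum_nonneg)
  qed
  define y' where "y' = 1 / real u * (\<Sum>j\<in>C. \<Sum>i\<in>S. x i j)"
  define q where "q = (\<Sum>i\<in>S. y i)"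
  have "y' = sum a C / real u" unfolding y'_def a_def by simp
  then have spread_lower: "real u * ((y' - of_int \<lfloor>y'\<rfloor>) * (of_int \<lceil>q\<rceil> - q)) \<le> T"
    using fractional_gap_le_spread[OF upos finC a01] hyp1 hyp2
    unfolding T_def q_def S_def[symmetric] a_def by (simp add: sum.swap[of _ S])
  have "(y' - of_int \<lfloor>y'\<rfloor>) * (of_int \<lceil>q\<rceil> - q) * \<Delta> \<le> T / real u * \<Delta>"
    using spread_lower \<Delta>_nonneg upos by (intro mult_right_mono) (auto simp: field_simps)
  also have "\<dots> \<le> (2 * DS + (4 * real l + 2) * D'S) / real u"
    using spread_upper upos by (simp add: divide_right_mono mult.commute)
  also have "\<dots> \<le> 4 / real u * DS + (4 * real l + 2) / real u * D'S"
    using DS_nonneg upos by (simp add: field_simps)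
  finally show ?thesis
    unfolding Let_def S_def[symmetric] y'_def q_def DS_def D'S_def \<Delta>_def[symmetric] .
qed

end
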